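(* If $\widetilde\alpha^{[+2]}$ is a smooth spin-$+2$-weighted function satisfying $\mathfrak T^{[+2]}\widetilde\alpha^{[+2]}=0$, then $$\big(\mathcal L^{[+2]}(\mathcal L^{[+2]}-2)-12M\partial_t\big)\widetilde\alpha^{[+2]}=w^2(w^{-1}L)(w^{-1}L)(w^{-1}\underline L)(w^{-1}\underline L)\widetilde\alpha^{[+2]}.$$ If $\widetilde\alpha^{[-2]}$ is a smooth spin-$-2$-weighted function satisfying $\mathfrak T^{[-2]}\widetilde\alpha^{[-2]}=0$, then $$\big(\mathcal L^{[-2]}(\mathcal L^{[-2]}-2)+12M\partial_t\big)\widetilde\alpha^{[-2]}=w^2(w^{-1}\underline L)(w^{-1}\underline L)(w^{-1}L)(w^{-1}L)\widetilde\alpha^{[-2]}.$$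
   Context: Fix $M>0$, $k>0$; $\Delta(r)=r^2+k^2r^4-2Mr$, $w:=\Delta/r^4$. On the Schwarzschild–AdS exterior with metric $-(1+k^2r^2-\frac{2M}{r})dt^2+(1+k^2r^2-\frac{2M}{r})^{-1}dr^2+r^2(d\vartheta^2+\sin^2\vartheta d\varphi^2)$, let $r^\star$ be given by $dr^\star/dr=r^2/\Delta$, $r^\star(\infty)=\pi/2$; $L=\partial_t+\partial_{r^\star}$, $\underline L=\partial_t-\partial_{r^\star}$, $w'=dw/dr^\star$; $(w^{-1}L)$ denotes the operator $\phi\mapsto w^{-1}L\phi$ and products denote compositions. $-\mathcal{L}^{[\pm2]}:=\frac{1}{\sin\vartheta}\partial_\vartheta(\sin\vartheta\partial_\vartheta)+\frac{1}{\sin^2\vartheta}\partial_\varphi^2\pm4i\frac{\cos\vartheta}{\sin^2\vartheta}\partial_\varphi-4\cot^2\vartheta-4$ on spin $\pm2$ functions. Teukolsky operators: $\mathfrak T^{[+2]}\phi=-L\underline L\phi+2\frac{w'}{w}\underline L\phi-w(\mathcal L^{[+2]}-2+\frac{6M}{r})\phi$, $\mathfrak T^{[-2]}\phi=-L\underline L\phi-2\frac{w'}{w}L\phi-w(\mathcal L^{[-2]}-2+\frac{6M}{r})\phi$. *)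

theory Defs
  imports "HOL-Analysis.Analysis"
begin

text \<open>Points are coordinates (t, r, theta, varphi) of the Schwarzschild-AdS exterior.
  The tortoise derivative d/dr* is expressed as (Delta/r^2) d/dr.\<close>

type_synonym pt = "real \<times> real \<times> real \<times> real"
type_synonym fn = "pt \<Rightarrow> complex"

definition Delta :: "real \<Rightarrow> real \<Rightarrow> real \<Rightarrow> real" where
  "Delta M k r = r^2 + k^2 * r^4 - 2 * M * r"

definition wf :: "real \<Rightarrow> real \<Rightarrow> real \<Rightarrow> real" where
  "wf M k r = Delta M k r / r^4"

definition wprime :: "real \<Rightarrow> real \<Rightarrow> real \<Rightarrow> real" where
  "wprime M k r = Delta M k r / r^2 * deriv (wf M k) r"

definition exterior :: "real \<Rightarrow> real \<Rightarrow> pt set" where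
  "exterior M k = {(t, r, th, ph). 0 < r \<and> 0 < Delta M k r \<and> 0 < th \<and> th < pi}"

definition ev :: "nat \<Rightarrow> pt" where
  "ev i = (if i = 0 then (1,0,0,0) else if i = 1 then (0,1,0,0)
           else if i = 2 then (0,0,1,0) else (0,0,0,1))"

text \<open>Coordinate partial derivative: 0 = t, 1 = r, 2 = theta, 3 = varphi.\<close>
definition pd :: "nat \<Rightarrow> fn \<Rightarrow> fn" where
  "pd i u = (\<lambda>p. vector_derivative (\<lambda>s. u (p + s *\<^sub>R ev i)) (at 0))"

definition smooth_on_pt :: "pt set \<Rightarrow> fn \<Rightarrow> bool" where
  "smooth_on_pt D u \<longleftrightarrow> (\<forall>is. \<forall>p\<in>D. fold pd is u differentiable (at p))"

definition Lop :: "real \<Rightarrow> real \<Rightarrow> fn \<Rightarrow> fn" where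
  "Lop M k u = (\<lambda>(t, r, th, ph). pd 0 u (t, r, th, ph)
        + complex_of_real (Delta M k r / r^2) * pd 1 u (t, r, th, ph))"

definition Lbar :: "real \<Rightarrow> real \<Rightarrow> fn \<Rightarrow> fn" where
  "Lbar M k u = (\<lambda>(t, r, th, ph). pd 0 u (t, r, th, ph)
        - complex_of_real (Delta M k r / r^2) * pd 1 u (t, r, th, ph))"

definition winvL :: "real \<Rightarrow> real \<Rightarrow> fn \<Rightarrow> fn" where
  "winvL M k u = (\<lambda>(t, r, th, ph). complex_of_real (1 / wf M k r) * Lop M k u (t, r, th, ph))"

definition winvLbar :: "real \<Rightarrow> real \<Rightarrow> fn \<Rightarrow> fn" where
  "winvLbar M k u = (\<lambda>(t, r, th, ph). complex_of_real (1 / wf M k r) * Lbar M k u (t, r, th, ph))"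

text \<open>Angular operator L^{[s]} for s = 2*sg, sg \<in> {1,-1}:
  -L u = (1/sin) d_th(sin d_th u) + (1/sin^2) d_ph^2 u + sg*4i cos/sin^2 d_ph u - 4 cot^2 u - 4 u\<close>
definition Lang :: "real \<Rightarrow> fn \<Rightarrow> fn" where
  "Lang sg u = (\<lambda>(t, r, th, ph). - (
       complex_of_real (1 / sin th) * pd 2 (\<lambda>(t', r', th', ph'). complex_of_real (sin th') * pd 2 u (t', r', th', ph')) (t, r, th, ph)
     + complex_of_real (1 / (sin th)^2) * pd 3 (pd 3 u) (t, r, th, ph)
     + complex_of_real sg * 4 * \<i> * complex_of_real (cos th / (sin th)^2) * pd 3 u (t, r, th, ph)
     - complex_of_real (4 * (cot th)^2) * u (t, r, th, ph)
     - 4 * u (t, r, th, ph)))"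

definition Teuk_plus :: "real \<Rightarrow> real \<Rightarrow> fn \<Rightarrow> fn" where
  "Teuk_plus M k u = (\<lambda>(t, r, th, ph).
       - Lop M k (Lbar M k u) (t, r, th, ph)
     + complex_of_real (2 * wprime M k r / wf M k r) * Lbar M k u (t, r, th, ph)
     - complex_of_real (wf M k r) * (Lang 1 u (t, r, th, ph) - 2 * u (t, r, th, ph)
           + complex_of_real (6 * M / r) * u (t, r, th, ph)))"

definition Teuk_minus :: "real \<Rightarrow> real \<Rightarrow> fn \<Rightarrow> fn" where
  "Teuk_minus M k u = (\<lambda>(t, r, th, ph).
       - Lop M k (Lbar M k u) (t, r, th, ph)
     - complex_of_real (2 * wprime M k r / wf M k r) * Lop M k u (t, r, th, ph)
     - complex_of_real (wf M k r) * (Lang (-1) u (t, r, th, ph) - 2 * u (t, r, th, ph)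
           + complex_of_real (6 * M / r) * u (t, r, th, ph)))"

end

theory Submission
  imports Defs
begin

(*
  Write T = d/dt, D = d/dr* (so D(1/r) = -w), L = T + D, Lbar = T - D, and let Ang be the angular
  operator L^[+2]. With A = Ang - 2 + 6M/r the Teukolsky equation reads w L (w^-2 Lbar alpha) = - A alpha,
  i.e. P = w^-1 Lbar alpha satisfies the first-order relation L P = (w'/w) P - A alpha. The operator
  Ang commutes with T, with D and with multiplication by functions of r, and T commutes with D; the only
  other input is the radial calculus w'/w = 6M/r^2 - 2/r and (w'/w)' = (2 - 12M/r) w. Applying Lbar to
  the first-order relation gives L (w^-1 Lbar P) = - (Ang - 6M/r) P - 6M alpha, and one more application
  of w L w^-1 produces (Ang - 6M/r)(Ang - 2 + 6M/r) alpha - 12M T alpha + 6M (w'/w) alpha, whose terms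
  without derivatives cancel. For spin -2 the same computation runs with L and Lbar exchanged.
  Since the commutations are applied to functions built from alpha, the argument needs that the
  smooth functions on the exterior form an algebra stable under partial derivatives.
*)

(* keeps the radial derivative in the form pd 1 instead of pd (Suc 0) *)
declare One_nat_def [simp del]

abbreviation rad :: "pt \<Rightarrow> real" where "rad q \<equiv> fst (snd q)"
abbreviation polar :: "pt \<Rightarrow> real" where "polar q \<equiv> fst (snd (snd q))"

section \<open>Partial derivatives along the coordinate axes\<close>

lemma ev_simps [simp]:
  "ev 0 = (1, 0, 0, 0)" "ev 1 = (0, 1, 0, 0)" "ev 2 = (0, 0, 1, 0)" "ev 3 = (0, 0, 0, 1)"
  by (simp_all add: ev_def)

lemma norm_ev [simp]: "norm (ev i) = 1"
  by (simp add: ev_def norm_Pair)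

lemma has_vector_derivative_along_ev:
  assumes "(u has_derivative u') (at (q + s *\<^sub>R ev i))"
  shows "((\<lambda>s. u (q + s *\<^sub>R ev i)) has_vector_derivative u' (ev i)) (at s)"
proof -
  have "((\<lambda>s. q + s *\<^sub>R ev i) has_derivative (\<lambda>s. s *\<^sub>R ev i)) (at s)"
    by (auto intro!: derivative_eq_intros)
  from has_derivative_compose[OF this assms]
  have "((\<lambda>s. u (q + s *\<^sub>R ev i)) has_derivative (\<lambda>s. u' (s *\<^sub>R ev i))) (at s)" .
  moreover have "(\<lambda>s. u' (s *\<^sub>R ev i)) = (\<lambda>s. s *\<^sub>R u' (ev i))"
    using has_derivative_linear[OF assms] by (simp add: linear_scale)
  ultimately show ?thesis
    unfolding has_vector_derivative_def by simp
qed

lemma pd_eq_derivative: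
  assumes "(u has_derivative u') (at q)"
  shows "pd i u q = u' (ev i)"
  unfolding pd_def
  by (rule vector_derivative_at) (use has_vector_derivative_along_ev[of u u' q 0 i] assms in simp)

lemma has_vector_derivative_pd:
  assumes "u differentiable (at (q + s *\<^sub>R ev i))"
  shows "((\<lambda>s. u (q + s *\<^sub>R ev i)) has_vector_derivative pd i u (q + s *\<^sub>R ev i)) (at s)"
proof -
  obtain u' where "(u has_derivative u') (at (q + s *\<^sub>R ev i))"
    using assms unfolding differentiable_def by blast
  then show ?thesis
    using has_vector_derivative_along_ev pd_eq_derivative by simp
qed

lemma pd_cong_open:
  assumes "open S" "p \<in> S" "\<And>q. q \<in> S \<Longrightarrow> f q = g q"
  shows "pd i f p = pd i g p"
proof -
  have "open ((\<lambda>s::real. p + s *\<^sub>R ev i) -` S)"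
    by (intro continuous_open_vimage assms(1)) (auto intro!: continuous_intros)
  from eventually_nhds_in_open[OF this, of 0]
  have "\<forall>\<^sub>F s in nhds 0. p + s *\<^sub>R ev i \<in> S"
    using assms(2) by simp
  then show ?thesis
    unfolding pd_def by (intro vector_derivative_cong_eq) (auto elim!: eventually_mono simp: assms(3))
qed

lemma fold_pd_cong_open:
  assumes "open S" "\<And>q. q \<in> S \<Longrightarrow> f q = g q" "p \<in> S"
  shows "fold pd is f p = fold pd is g p"
  using assms(2,3)
proof (induction "is" arbitrary: f g p)
  case (Cons i "is")
  have "\<And>q. q \<in> S \<Longrightarrow> pd i f q = pd i g q"
    using pd_cong_open[OF assms(1)] Cons.prems(1) by blast
  from Cons.IH[OF this Cons.prems(2)] show ?case
    by simp
qed simp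

lemma differentiable_cong_open:
  assumes "open S" "p \<in> S" "\<And>q. q \<in> S \<Longrightarrow> f q = g q" "f differentiable (at p)"
  shows "g differentiable (at p)"
proof -
  obtain f' where "(f has_derivative f') (at p)"
    using assms(4) unfolding differentiable_def by blast
  from has_derivative_transform_within_open[OF this assms(1-3)] show ?thesis
    unfolding differentiable_def by blast
qed

lemma pd_const [simp]: "pd i (\<lambda>q. c) p = 0"
  using pd_eq_derivative[OF has_derivative_const] by simp

lemma pd_add:
  assumes "u differentiable (at p)" "v differentiable (at p)"
  shows "pd i (\<lambda>q. u q + v q) p = pd i u p + pd i v p"
proof -
  obtain u' v' where u': "(u has_derivative u') (at p)" and v': "(v has_derivative v') (at p)"
    using assms unfolding differentiable_def by blast
  have "pd i (\<lambda>q. u q + v q) p = u' (ev i) + v' (ev i)"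
    using has_derivative_add[OF u' v'] by (rule pd_eq_derivative)
  then show ?thesis
    by (simp add: pd_eq_derivative[OF u'] pd_eq_derivative[OF v'])
qed

lemma pd_mult:
  assumes "u differentiable (at p)" "v differentiable (at p)"
  shows "pd i (\<lambda>q. u q * v q) p = pd i u p * v p + u p * pd i v p"
proof -
  obtain u' v' where u': "(u has_derivative u') (at p)" and v': "(v has_derivative v') (at p)"
    using assms unfolding differentiable_def by blast
  have "pd i (\<lambda>q. u q * v q) p = u p * v' (ev i) + u' (ev i) * v p"
    using has_derivative_mult[OF u' v'] by (rule pd_eq_derivative)
  then show ?thesis
    by (simp add: pd_eq_derivative[OF u'] pd_eq_derivative[OF v'])
qed

lemma pd_mult_invariant:
  assumes "u differentiable (at p)" "\<And>s. c (p + s *\<^sub>R ev i) = c p"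
  shows "pd i (\<lambda>q. c q * u q) p = c p * pd i u p"
  unfolding pd_def[of i "\<lambda>q. c q * u q"] assms(2)
  by (rule vector_derivative_at)
     (use has_vector_derivative_pd[of u p 0 i] assms(1) in \<open>auto intro: has_vector_derivative_mult_right\<close>)

lemma pd_radial:
  assumes "(f has_real_derivative f') (at (rad p))"
  shows "pd 1 (\<lambda>q. complex_of_real (f (rad q))) p = complex_of_real f'"
proof -
  have "((\<lambda>s. f (rad p + s)) has_real_derivative f') (at 0)"
    using DERIV_shift[of f f' 0 "rad p"] assms by (simp add: add.commute)
  then have "((\<lambda>s. complex_of_real (f (rad (p + s *\<^sub>R ev 1)))) has_vector_derivative complex_of_real f') (at 0)"
    by (cases p) (auto intro: has_vector_derivative_of_real)
  then show ?thesis
    unfolding pd_def by (rule vector_derivative_at)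
qed

lemma second_difference_estimate:
  fixes u :: fn
  assumes D: "bounded_linear D" and e: "0 \<le> e"
    and du: "\<And>y. norm (y - p) \<le> 2 * \<bar>h\<bar> \<Longrightarrow> u differentiable (at y)"
    and lin: "\<And>y. norm (y - p) \<le> 2 * \<bar>h\<bar> \<Longrightarrow>
      norm (pd i u y - pd i u p - D (y - p)) \<le> e * norm (y - p)"
  shows "norm (u (p + h *\<^sub>R ev j + h *\<^sub>R ev i) - u (p + h *\<^sub>R ev i) - u (p + h *\<^sub>R ev j) + u p
      - h\<^sup>2 *\<^sub>R D (ev j)) \<le> 8 * e * h\<^sup>2"
proof -
  interpret D: bounded_linear D by (rule D)
  define G where "G y = pd i u y - pd i u p - D (y - p)" for y
  define \<phi> where "\<phi> s = u (p + h *\<^sub>R ev j + s *\<^sub>R ev i) - u (p + s *\<^sub>R ev i)" for s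
  define \<phi>' where "\<phi>' s = pd i u (p + h *\<^sub>R ev j + s *\<^sub>R ev i) - pd i u (p + s *\<^sub>R ev i)" for s
  have near: "norm (p + h *\<^sub>R ev j + s *\<^sub>R ev i - p) \<le> 2 * \<bar>h\<bar>"
    "norm (p + s *\<^sub>R ev i - p) \<le> 2 * \<bar>h\<bar>" "norm (p + h *\<^sub>R ev j - p) \<le> 2 * \<bar>h\<bar>"
    if "s \<in> closed_segment 0 h" for s
  proof -
    have "\<bar>s\<bar> \<le> \<bar>h\<bar>"
      using that by (auto simp: closed_segment_eq_real_ivl split: if_splits)
    moreover have "norm (h *\<^sub>R ev j + s *\<^sub>R ev i) \<le> \<bar>h\<bar> + \<bar>s\<bar>"
      using norm_triangle_ineq[of "h *\<^sub>R ev j" "s *\<^sub>R ev i"] by simp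
    ultimately show "norm (p + h *\<^sub>R ev j + s *\<^sub>R ev i - p) \<le> 2 * \<bar>h\<bar>"
      "norm (p + s *\<^sub>R ev i - p) \<le> 2 * \<bar>h\<bar>" "norm (p + h *\<^sub>R ev j - p) \<le> 2 * \<bar>h\<bar>"
      by (simp_all add: add.assoc)
  qed
  have G: "norm (G y) \<le> 2 * e * \<bar>h\<bar>" if "norm (y - p) \<le> 2 * \<bar>h\<bar>" for y
    using lin[OF that] mult_left_mono[OF that e] unfolding G_def by linarith
  have "(\<phi> has_vector_derivative \<phi>' s) (at s within closed_segment 0 h)"
    if "s \<in> closed_segment 0 h" for s
    unfolding \<phi>_def[abs_def] \<phi>'_def using near[OF that]
    by (intro has_vector_derivative_at_within[OF has_vector_derivative_diff] has_vector_derivative_pd du)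
  moreover have "norm (\<phi>' s - \<phi>' 0) \<le> 6 * e * \<bar>h\<bar>" if "s \<in> closed_segment 0 h" for s
  proof -
    let ?a = "G (p + h *\<^sub>R ev j + s *\<^sub>R ev i)" and ?b = "G (p + s *\<^sub>R ev i)"
      and ?c = "G (p + h *\<^sub>R ev j)"
    have "\<phi>' s - \<phi>' 0 = ?a - ?b - ?c"
      unfolding \<phi>'_def G_def by (simp add: D.add D.diff algebra_simps)
    moreover have "norm (?a - ?b - ?c) \<le> norm ?a + norm ?b + norm ?c"
      using norm_triangle_ineq4[of "?a - ?b" ?c] norm_triangle_ineq4[of ?a ?b] by linarith
    ultimately have "norm (\<phi>' s - \<phi>' 0) \<le> norm ?a + norm ?b + norm ?c"
      by simp
    then show ?thesis
      using G[OF near(1)[OF that]] G[OF near(2)[OF that]] G[OF near(3)[OF that]] by linarith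
  qed
  ultimately have "norm (\<phi> h - \<phi> 0 - (h - 0) *\<^sub>R \<phi>' 0) \<le> norm (h - 0) * (6 * e * \<bar>h\<bar>)"
    by (intro vector_differentiable_bound_linearization[where S = "closed_segment 0 h"]) auto
  moreover have "\<phi>' 0 = h *\<^sub>R D (ev j) + G (p + h *\<^sub>R ev j)"
    unfolding \<phi>'_def G_def by (simp add: D.scaleR)
  moreover have "norm (h *\<^sub>R G (p + h *\<^sub>R ev j)) \<le> \<bar>h\<bar> * (2 * e * \<bar>h\<bar>)"
    using G[of "p + h *\<^sub>R ev j"] by (simp add: mult_left_mono)
  ultimately show ?thesis
    using norm_triangle_ineq[of "\<phi> h - \<phi> 0 - h *\<^sub>R \<phi>' 0" "h *\<^sub>R G (p + h *\<^sub>R ev j)"]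
    by (simp add: \<phi>_def algebra_simps power2_eq_square)
qed

lemma second_difference_quotient_tendsto:
  fixes u :: fn
  assumes S: "open S" "p \<in> S" and du: "\<And>q. q \<in> S \<Longrightarrow> u differentiable (at q)"
    and D: "(pd i u has_derivative D) (at p)"
  shows "((\<lambda>h. (u (p + h *\<^sub>R ev j + h *\<^sub>R ev i) - u (p + h *\<^sub>R ev i) - u (p + h *\<^sub>R ev j) + u p)
            / of_real (h\<^sup>2)) \<longlongrightarrow> D (ev j)) (at 0)"
  unfolding LIM_eq
proof (intro allI impI)
  fix \<epsilon> :: real
  assume "0 < \<epsilon>"
  then obtain d1 where d1: "d1 > 0" "\<And>y. norm (y - p) < d1 \<Longrightarrow>
      norm (pd i u y - pd i u p - D (y - p)) \<le> \<epsilon> / 10 * norm (y - p)"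
    using D unfolding has_derivative_at_alt by (metis divide_pos_pos zero_less_numeral)
  obtain d2 where d2: "d2 > 0" "ball p d2 \<subseteq> S"
    using S open_contains_ball by blast
  have "norm ((u (p + h *\<^sub>R ev j + h *\<^sub>R ev i) - u (p + h *\<^sub>R ev i) - u (p + h *\<^sub>R ev j) + u p)
      / of_real (h\<^sup>2) - D (ev j)) < \<epsilon>" if h: "h \<noteq> 0" "\<bar>h\<bar> < min d1 d2 / 3" for h
  proof -
    let ?\<Delta> = "u (p + h *\<^sub>R ev j + h *\<^sub>R ev i) - u (p + h *\<^sub>R ev i) - u (p + h *\<^sub>R ev j) + u p"
    have "norm (?\<Delta> - h\<^sup>2 *\<^sub>R D (ev j)) \<le> 8 * (\<epsilon> / 10) * h\<^sup>2"
    proof (rule second_difference_estimate[OF has_derivative_bounded_linear[OF D]])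
      fix y
      assume y: "norm (y - p) \<le> 2 * \<bar>h\<bar>"
      then have "norm (y - p) < d2"
        using h(2) abs_ge_zero[of h] by linarith
      then have "y \<in> ball p d2"
        by (simp add: dist_norm norm_minus_commute)
      then show "u differentiable (at y)"
        using d2(2) du by blast
      show "norm (pd i u y - pd i u p - D (y - p)) \<le> \<epsilon> / 10 * norm (y - p)"
        using y h(2) by (intro d1(2)) linarith
    qed (use \<open>0 < \<epsilon>\<close> in simp)
    moreover have "?\<Delta> / of_real (h\<^sup>2) - D (ev j) = (?\<Delta> - h\<^sup>2 *\<^sub>R D (ev j)) / of_real (h\<^sup>2)"
      using h by (simp add: field_simps scaleR_conv_of_real)
    ultimately have "norm (?\<Delta> / of_real (h\<^sup>2) - D (ev j)) \<le> 8 * (\<epsilon> / 10)"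
      using h(1) by (simp add: norm_divide norm_power divide_le_eq)
    then show ?thesis
      using \<open>0 < \<epsilon>\<close> by simp
  qed
  then show "\<exists>s>0. \<forall>h. h \<noteq> 0 \<and> norm (h - 0) < s \<longrightarrow>
      norm ((u (p + h *\<^sub>R ev j + h *\<^sub>R ev i) - u (p + h *\<^sub>R ev i) - u (p + h *\<^sub>R ev j) + u p)
        / of_real (h\<^sup>2) - D (ev j)) < \<epsilon>"
    using d1 d2 by (intro exI[of _ "min d1 d2 / 3"]) auto
qed

text \<open>Both mixed partials are limits of the same second difference quotient.\<close>
lemma pd_commute:
  fixes u :: fn
  assumes S: "open S" "p \<in> S" and du: "\<And>q. q \<in> S \<Longrightarrow> u differentiable (at q)"
    and di: "pd i u differentiable (at p)" and dj: "pd j u differentiable (at p)"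
  shows "pd j (pd i u) p = pd i (pd j u) p"
proof -
  obtain Di Dj where Di: "(pd i u has_derivative Di) (at p)" and Dj: "(pd j u has_derivative Dj) (at p)"
    using di dj unfolding differentiable_def by blast
  define Q where "Q a b h = (u (p + h *\<^sub>R ev a + h *\<^sub>R ev b) - u (p + h *\<^sub>R ev b)
    - u (p + h *\<^sub>R ev a) + u p) / of_real (h\<^sup>2)" for a b h
  have "(Q j i \<longlongrightarrow> Di (ev j)) (at 0)" and "(Q i j \<longlongrightarrow> Dj (ev i)) (at 0)"
    unfolding Q_def
    using second_difference_quotient_tendsto[OF S du Di, of j]
      second_difference_quotient_tendsto[OF S du Dj, of i] by simp_all
  moreover have "Q i j = Q j i"
    by (simp add: Q_def fun_eq_iff algebra_simps)
  ultimately have "Di (ev j) = Dj (ev i)"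
    using tendsto_unique[OF at_neq_bot] by metis
  then show ?thesis
    using pd_eq_derivative[OF Di] pd_eq_derivative[OF Dj] by simp
qed

section \<open>Smooth functions\<close>

fun differentiable_upto :: "nat \<Rightarrow> pt set \<Rightarrow> fn \<Rightarrow> bool" where
  "differentiable_upto 0 S u \<longleftrightarrow> (\<forall>p\<in>S. u differentiable (at p))"
| "differentiable_upto (Suc n) S u \<longleftrightarrow>
     (\<forall>p\<in>S. u differentiable (at p)) \<and> (\<forall>i. differentiable_upto n S (pd i u))"

lemma differentiable_upto_iff_fold_pd:
  "differentiable_upto n S u
    \<longleftrightarrow> (\<forall>is. length is \<le> n \<longrightarrow> (\<forall>p\<in>S. fold pd is u differentiable (at p)))"
proof (induction n arbitrary: u)
  case (Suc n)
  have "(\<forall>is. length is \<le> Suc n \<longrightarrow> P is)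
      \<longleftrightarrow> P [] \<and> (\<forall>i is. length is \<le> n \<longrightarrow> P (i # is))"
    for P :: "nat list \<Rightarrow> bool"
  proof
    assume "P [] \<and> (\<forall>i is. length is \<le> n \<longrightarrow> P (i # is))"
    then show "\<forall>is. length is \<le> Suc n \<longrightarrow> P is"
      by (intro allI impI, case_tac "is") auto
  qed auto
  then show ?case
    by (simp add: Suc.IH)
qed simp

lemma smooth_on_pt_iff_differentiable_upto:
  "smooth_on_pt S u \<longleftrightarrow> (\<forall>n. differentiable_upto n S u)"
  unfolding smooth_on_pt_def differentiable_upto_iff_fold_pd by (meson le_refl)

lemma differentiable_upto_SucD: "differentiable_upto (Suc n) S u \<Longrightarrow> differentiable_upto n S u"
  by (induction n arbitrary: u) auto

lemma differentiable_upto_cong: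
  assumes "open S" "\<And>q. q \<in> S \<Longrightarrow> u q = v q" "differentiable_upto n S u"
  shows "differentiable_upto n S v"
  using assms(2,3)
proof (induction n arbitrary: u v)
  case 0
  have "v differentiable (at p)" if "p \<in> S" for p
    using 0 that by (intro differentiable_cong_open[OF assms(1) that 0(1)]) auto
  then show ?case
    by simp
next
  case (Suc n)
  have "v differentiable (at p)" if "p \<in> S" for p
    using Suc.prems that by (intro differentiable_cong_open[OF assms(1) that Suc.prems(1)]) auto
  moreover have "differentiable_upto n S (pd i v)" for i
  proof (rule Suc.IH)
    show "pd i u q = pd i v q" if "q \<in> S" for q
      by (rule pd_cong_open[OF assms(1) that Suc.prems(1)])
    show "differentiable_upto n S (pd i u)"
      using Suc.prems(2) by simp
  qed
  ultimately show ?case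
    by simp
qed

lemma differentiable_upto_const: "differentiable_upto n S (\<lambda>q. c)"
proof (induction n arbitrary: c)
  case (Suc n)
  have "pd i (\<lambda>q. c) = (\<lambda>q. 0)" for i
    by (simp add: fun_eq_iff)
  then show ?case
    using Suc.IH by simp
qed simp

lemma differentiable_upto_add:
  assumes "open S" "differentiable_upto n S u" "differentiable_upto n S v"
  shows "differentiable_upto n S (\<lambda>q. u q + v q)"
  using assms(2,3)
proof (induction n arbitrary: u v)
  case (Suc n)
  have "differentiable_upto n S (pd i (\<lambda>q. u q + v q))" for i
    by (rule differentiable_upto_cong[OF assms(1) _ Suc.IH[of "pd i u" "pd i v"]])
       (use Suc.prems in \<open>simp_all add: pd_add\<close>)
  then show ?case
    using Suc.prems by simp
qed simp

lemma differentiable_upto_mult: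
  assumes "open S" "differentiable_upto n S u" "differentiable_upto n S v"
  shows "differentiable_upto n S (\<lambda>q. u q * v q)"
  using assms(2,3)
proof (induction n arbitrary: u v)
  case (Suc n)
  have "differentiable_upto n S (pd i (\<lambda>q. u q * v q))" for i
  proof (rule differentiable_upto_cong[OF assms(1)])
    show "differentiable_upto n S (\<lambda>q. pd i u q * v q + u q * pd i v q)"
      using Suc.prems by (intro differentiable_upto_add[OF assms(1)] Suc.IH)
        (simp_all add: differentiable_upto_SucD)
    show "pd i u q * v q + u q * pd i v q = pd i (\<lambda>q. u q * v q) q" if "q \<in> S" for q
      using Suc.prems that by (simp add: pd_mult)
  qed
  then show ?case
    using Suc.prems by simp
qed simp

lemma differentiable_upto_uminus:
  assumes "open S" "differentiable_upto n S u"
  shows "differentiable_upto n S (\<lambda>q. - u q)"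
  using differentiable_upto_mult[OF assms(1) differentiable_upto_const[of n S "- 1"] assms(2)]
  by simp

lemma differentiable_upto_diff:
  assumes "open S" "differentiable_upto n S u" "differentiable_upto n S v"
  shows "differentiable_upto n S (\<lambda>q. u q - v q)"
  using differentiable_upto_add[OF assms(1,2) differentiable_upto_uminus[OF assms(1,3)]] by simp

lemma differentiable_upto_inverse:
  assumes "open S" "\<And>q. q \<in> S \<Longrightarrow> u q \<noteq> 0" "differentiable_upto n S u"
  shows "differentiable_upto n S (\<lambda>q. inverse (u q))"
  using assms(3)
proof (induction n)
  case 0
  then show ?case
    using assms(2) by simp
next
  case (Suc n)
  have "differentiable_upto n S (pd i (\<lambda>q. inverse (u q)))" for i
  proof (rule differentiable_upto_cong[OF assms(1)])
    show "differentiable_upto n S (\<lambda>q. - (inverse (u q) * pd i u q * inverse (u q)))"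
      using Suc.prems Suc.IH[OF differentiable_upto_SucD]
      by (intro differentiable_upto_uminus[OF assms(1)] differentiable_upto_mult[OF assms(1)]) simp_all
    show "- (inverse (u q) * pd i u q * inverse (u q)) = pd i (\<lambda>q. inverse (u q)) q"
      if "q \<in> S" for q
    proof -
      have "u differentiable (at q)"
        using Suc.prems that by simp
      then obtain u' where u': "(u has_derivative u') (at q)"
        unfolding differentiable_def by blast
      show ?thesis
        using pd_eq_derivative[OF Deriv.has_derivative_inverse[OF assms(2)[OF that] u']]
        by (simp add: pd_eq_derivative[OF u'])
    qed
  qed
  then show ?case
    using Suc.prems assms(2) by simp
qed

lemma differentiable_upto_linear:
  assumes "bounded_linear l"
  shows "differentiable_upto n S (\<lambda>q. complex_of_real (l q))"
proof -
  have l: "((\<lambda>q. complex_of_real (l q)) has_derivative (\<lambda>h. complex_of_real (l h))) (at p)" for p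
    using assms by (intro has_derivative_of_real bounded_linear_imp_has_derivative)
  then have "pd i (\<lambda>q. complex_of_real (l q)) = (\<lambda>q. complex_of_real (l (ev i)))" for i
    using pd_eq_derivative[OF l] by (simp add: fun_eq_iff)
  moreover have "(\<lambda>q. complex_of_real (l q)) differentiable (at p)" for p
    using l unfolding differentiable_def by blast
  ultimately show ?thesis
    by (cases n) (simp_all add: differentiable_upto_const)
qed

lemma differentiable_upto_sin_cos:
  assumes "open S" "bounded_linear l"
  shows "differentiable_upto n S (\<lambda>q. complex_of_real (sin (l q)))
       \<and> differentiable_upto n S (\<lambda>q. complex_of_real (cos (l q)))"
proof -
  have l: "(l has_derivative l) (at p)" for p
    using assms(2) by (rule bounded_linear_imp_has_derivative)
  have sin: "((\<lambda>q. complex_of_real (sin (l q))) has_derivative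
      (\<lambda>h. complex_of_real (l h * cos (l p)))) (at p)" for p
    by (intro has_derivative_of_real has_derivative_sin l)
  have cos: "((\<lambda>q. complex_of_real (cos (l q))) has_derivative
      (\<lambda>h. complex_of_real (l h * - sin (l p)))) (at p)" for p
    by (intro has_derivative_of_real has_derivative_cos l)
  have pd_sin: "pd i (\<lambda>q. complex_of_real (sin (l q)))
      = (\<lambda>q. complex_of_real (l (ev i)) * complex_of_real (cos (l q)))"
    and pd_cos: "pd i (\<lambda>q. complex_of_real (cos (l q)))
      = (\<lambda>q. complex_of_real (- l (ev i)) * complex_of_real (sin (l q)))" for i
    using pd_eq_derivative[OF sin] pd_eq_derivative[OF cos] by (simp_all add: fun_eq_iff)
  have "(\<lambda>q. complex_of_real (sin (l q))) differentiable (at p)"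
    and "(\<lambda>q. complex_of_real (cos (l q))) differentiable (at p)" for p
    using sin cos unfolding differentiable_def by blast+
  then show ?thesis
  proof (induction n)
    case 0
    then show ?case
      by simp
  next
    case (Suc n)
    then show ?case
      unfolding differentiable_upto.simps pd_sin pd_cos
      by (auto intro!: differentiable_upto_mult[OF assms(1)] differentiable_upto_uminus[OF assms(1)]
          differentiable_upto_const)
  qed
qed

lemma smooth_on_pt_differentiable: "smooth_on_pt S u \<Longrightarrow> p \<in> S \<Longrightarrow> u differentiable (at p)"
  using differentiable_upto.simps(1) smooth_on_pt_iff_differentiable_upto by blast

lemma smooth_on_pt_pd: "smooth_on_pt S u \<Longrightarrow> smooth_on_pt S (pd i u)"
  unfolding smooth_on_pt_iff_differentiable_upto
  by (metis differentiable_upto.simps(2))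

lemma smooth_on_pt_fold_pd: "smooth_on_pt S u \<Longrightarrow> smooth_on_pt S (fold pd is u)"
  by (induction "is" arbitrary: u) (simp_all add: smooth_on_pt_pd)

lemma smooth_on_pt_cong:
  "open S \<Longrightarrow> (\<And>q. q \<in> S \<Longrightarrow> u q = v q) \<Longrightarrow> smooth_on_pt S u
    \<Longrightarrow> smooth_on_pt S v"
  unfolding smooth_on_pt_iff_differentiable_upto using differentiable_upto_cong by blast

lemma smooth_on_pt_const: "smooth_on_pt S (\<lambda>q. c)"
  unfolding smooth_on_pt_iff_differentiable_upto by (simp add: differentiable_upto_const)

lemma smooth_on_pt_add:
  "open S \<Longrightarrow> smooth_on_pt S u \<Longrightarrow> smooth_on_pt S v \<Longrightarrow> smooth_on_pt S (\<lambda>q. u q + v q)"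
  unfolding smooth_on_pt_iff_differentiable_upto by (simp add: differentiable_upto_add)

lemma smooth_on_pt_diff:
  "open S \<Longrightarrow> smooth_on_pt S u \<Longrightarrow> smooth_on_pt S v \<Longrightarrow> smooth_on_pt S (\<lambda>q. u q - v q)"
  unfolding smooth_on_pt_iff_differentiable_upto by (simp add: differentiable_upto_diff)

lemma smooth_on_pt_uminus:
  "open S \<Longrightarrow> smooth_on_pt S u \<Longrightarrow> smooth_on_pt S (\<lambda>q. - u q)"
  unfolding smooth_on_pt_iff_differentiable_upto by (simp add: differentiable_upto_uminus)

lemma smooth_on_pt_mult:
  "open S \<Longrightarrow> smooth_on_pt S u \<Longrightarrow> smooth_on_pt S v \<Longrightarrow> smooth_on_pt S (\<lambda>q. u q * v q)"
  unfolding smooth_on_pt_iff_differentiable_upto by (simp add: differentiable_upto_mult)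

lemma smooth_on_pt_power:
  "open S \<Longrightarrow> smooth_on_pt S u \<Longrightarrow> smooth_on_pt S (\<lambda>q. u q ^ n)"
  by (induction n) (simp_all add: smooth_on_pt_const smooth_on_pt_mult)

lemma smooth_on_pt_divide:
  assumes "open S" "smooth_on_pt S u" "smooth_on_pt S v" "\<And>q. q \<in> S \<Longrightarrow> v q \<noteq> 0"
  shows "smooth_on_pt S (\<lambda>q. u q / v q)"
proof -
  have "smooth_on_pt S (\<lambda>q. inverse (v q))"
    using assms differentiable_upto_inverse unfolding smooth_on_pt_iff_differentiable_upto by blast
  then show ?thesis
    using smooth_on_pt_mult[OF assms(1,2)] by (simp add: divide_inverse)
qed

lemma smooth_on_pt_linear: "bounded_linear l \<Longrightarrow> smooth_on_pt S (\<lambda>q. complex_of_real (l q))"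
  unfolding smooth_on_pt_iff_differentiable_upto by (simp add: differentiable_upto_linear)

lemma smooth_on_pt_sin:
  "open S \<Longrightarrow> bounded_linear l \<Longrightarrow> smooth_on_pt S (\<lambda>q. complex_of_real (sin (l q)))"
  and smooth_on_pt_cos:
  "open S \<Longrightarrow> bounded_linear l \<Longrightarrow> smooth_on_pt S (\<lambda>q. complex_of_real (cos (l q)))"
  unfolding smooth_on_pt_iff_differentiable_upto by (simp_all add: differentiable_upto_sin_cos)

lemma bounded_linear_rad: "bounded_linear rad"
  and bounded_linear_polar: "bounded_linear polar"
  by (intro bounded_linear_compose[OF bounded_linear_fst] bounded_linear_compose[OF bounded_linear_snd]
      bounded_linear_snd)+

lemmas smooth_on_pt_intros =
  smooth_on_pt_add smooth_on_pt_diff smooth_on_pt_uminus smooth_on_pt_mult smooth_on_pt_power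
  smooth_on_pt_divide smooth_on_pt_const smooth_on_pt_pd
  smooth_on_pt_linear[OF bounded_linear_rad]
  smooth_on_pt_sin[OF _ bounded_linear_polar] smooth_on_pt_cos[OF _ bounded_linear_polar]

lemma pd_commute_smooth:
  assumes "open S" "smooth_on_pt S u" "p \<in> S"
  shows "pd j (pd i u) p = pd i (pd j u) p"
  using assms(2,3) smooth_on_pt_differentiable[OF assms(2)]
    smooth_on_pt_differentiable[OF smooth_on_pt_pd[OF assms(2)]]
  by (intro pd_commute[OF assms(1,3)]) simp_all

lemma fold_pd_insort:
  assumes "open S" "smooth_on_pt S u" "sorted ys" "p \<in> S"
  shows "fold pd (x # ys) u p = fold pd (insort x ys) u p"
  using assms(2,3)
proof (induction ys arbitrary: u)
  case (Cons y ys)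
  show ?case
  proof (cases "x \<le> y")
    case False
    have "fold pd (x # y # ys) u p = fold pd ys (pd y (pd x u)) p"
      by simp
    also have "\<dots> = fold pd ys (pd x (pd y u)) p"
      by (rule fold_pd_cong_open[OF assms(1) pd_commute_smooth[OF assms(1) Cons.prems(1)] assms(4)])
    also have "\<dots> = fold pd (insort x ys) (pd y u) p"
      using Cons.IH[OF smooth_on_pt_pd[OF Cons.prems(1)]] Cons.prems(2) by simp
    finally show ?thesis
      using False by simp
  qed simp
qed simp

lemma fold_pd_sort:
  assumes "open S" "smooth_on_pt S u" "p \<in> S"
  shows "fold pd xs u p = fold pd (sort xs) u p"
  using assms(2)
proof (induction xs arbitrary: u)
  case (Cons x xs)
  have "fold pd (x # xs) u p = fold pd (sort xs) (pd x u) p"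
    using Cons.IH[OF smooth_on_pt_pd[OF Cons.prems]] by simp
  also have "\<dots> = fold pd (insort x (sort xs)) u p"
    using fold_pd_insort[OF assms(1) Cons.prems _ assms(3)] by simp
  finally show ?case
    by simp
qed simp

lemma fold_pd_perm:
  assumes "open S" "smooth_on_pt S u" "p \<in> S" "mset xs = mset ys"
  shows "fold pd xs u p = fold pd ys u p"
proof -
  have "sort xs = sort ys"
    using assms(4) by (metis properties_for_sort sorted_sort mset_sort)
  then show ?thesis
    using fold_pd_sort[OF assms(1-3), of xs] fold_pd_sort[OF assms(1-3), of ys] by simp
qed

lemma fold_pd_add:
  assumes "open S" "smooth_on_pt S u" "smooth_on_pt S v" "p \<in> S"
  shows "fold pd is (\<lambda>q. u q + v q) p = fold pd is u p + fold pd is v p"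
  using assms(2,3,4)
proof (induction "is" arbitrary: u v p)
  case (Cons i "is")
  have "fold pd is (pd i (\<lambda>q. u q + v q)) p = fold pd is (\<lambda>q. pd i u q + pd i v q) p"
    using Cons.prems
    by (intro fold_pd_cong_open[OF assms(1)]) (simp_all add: pd_add smooth_on_pt_differentiable)
  then show ?case
    using Cons.IH[OF smooth_on_pt_pd[OF Cons.prems(1)] smooth_on_pt_pd[OF Cons.prems(2)] Cons.prems(3)]
    by simp
qed simp

lemma fold_pd_mult_invariant:
  assumes "open S" "smooth_on_pt S u" "p \<in> S"
    and "\<And>i q s. i \<in> set is \<Longrightarrow> c (q + s *\<^sub>R ev i) = c q"
  shows "fold pd is (\<lambda>q. c q * u q) p = c p * fold pd is u p"
  using assms(2-4)
proof (induction "is" arbitrary: u p)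
  case (Cons i "is")
  have "fold pd is (pd i (\<lambda>q. c q * u q)) p = fold pd is (\<lambda>q. c q * pd i u q) p"
    using Cons.prems
    by (intro fold_pd_cong_open[OF assms(1)]) (simp_all add: pd_mult_invariant smooth_on_pt_differentiable)
  then show ?case
    using Cons.IH[OF smooth_on_pt_pd[OF Cons.prems(1)] Cons.prems(2)] Cons.prems(3) by simp
qed simp

section \<open>Radial functions and null derivatives\<close>

lemma open_exterior: "open (exterior M k)"
proof -
  have "exterior M k = {q. 0 < rad q \<and> 0 < Delta M k (rad q) \<and> 0 < polar q \<and> polar q < pi}"
    unfolding exterior_def by auto
  also have "open \<dots>"
    unfolding Delta_def by (intro open_Collect_conj open_Collect_less continuous_intros)
  finally show ?thesis .
qed

lemma exteriorD:
  assumes "q \<in> exterior M k"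
  shows "0 < rad q" "0 < Delta M k (rad q)" "0 < sin (polar q)"
  using assms by (auto simp: exterior_def intro!: sin_gt_zero)

definition radial_mult :: "(real \<Rightarrow> real) \<Rightarrow> fn \<Rightarrow> fn" where
  "radial_mult f u = (\<lambda>q. complex_of_real (f (rad q)) * u q)"

lemma radial_mult_apply [simp]: "radial_mult f u p = complex_of_real (f (rad p)) * u p"
  by (simp add: radial_mult_def)

lemma rad_ev: "i \<noteq> 1 \<Longrightarrow> rad (ev i) = 0"
  and polar_ev: "i \<noteq> 2 \<Longrightarrow> polar (ev i) = 0"
  by (simp_all add: ev_def)

lemma pd_radial_mult:
  assumes "u differentiable (at p)" "i \<noteq> 1"
  shows "pd i (radial_mult f u) p = radial_mult f (pd i u) p"
  unfolding radial_mult_def using assms by (intro pd_mult_invariant) (simp_all add: rad_ev)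

lemma pd_radial_mult_rad:
  assumes "u differentiable (at p)" "(f has_real_derivative f') (at (rad p))"
  shows "pd 1 (radial_mult f u) p = radial_mult f (pd 1 u) p + complex_of_real f' * u p"
proof -
  have "((\<lambda>q. complex_of_real (f (rad q))) has_derivative (\<lambda>h. complex_of_real (rad h * f'))) (at p)"
    using assms(2) by (intro has_derivative_of_real DERIV_compose_FDERIV bounded_linear_imp_has_derivative
        bounded_linear_rad)
  then have "(\<lambda>q. complex_of_real (f (rad q))) differentiable (at p)"
    unfolding differentiable_def by blast
  then have "pd 1 (radial_mult f u) p
      = pd 1 (\<lambda>q. complex_of_real (f (rad q))) p * u p + complex_of_real (f (rad p)) * pd 1 u p"
    unfolding radial_mult_def using assms(1) by (rule pd_mult)
  then show ?thesis
    using pd_radial[OF assms(2)] by (simp add: radial_mult_def)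
qed

lemma smooth_on_pt_radial_mult:
  "open S \<Longrightarrow> smooth_on_pt S (\<lambda>q. complex_of_real (f (rad q))) \<Longrightarrow> smooth_on_pt S u
    \<Longrightarrow> smooth_on_pt S (radial_mult f u)"
  unfolding radial_mult_def by (rule smooth_on_pt_mult)

lemma smooth_on_pt_radial_Delta:
  "smooth_on_pt (exterior M k) (\<lambda>q. complex_of_real (Delta M k (rad q)))"
  unfolding Delta_def using open_exterior by simp (intro smooth_on_pt_intros)

definition wprime_over_wf :: "real \<Rightarrow> real \<Rightarrow> real" where
  "wprime_over_wf M r = 6 * M / r ^ 2 - 2 / r"

lemma smooth_on_pt_radial:
  shows smooth_on_pt_radial_tortoise: "smooth_on_pt (exterior M k)
      (\<lambda>q. complex_of_real (c * (Delta M k (rad q) / rad q ^ 2)))"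
    and smooth_on_pt_radial_wf: "smooth_on_pt (exterior M k) (\<lambda>q. complex_of_real (wf M k (rad q)))"
    and smooth_on_pt_radial_inverse_wf:
      "smooth_on_pt (exterior M k) (\<lambda>q. complex_of_real (1 / wf M k (rad q)))"
    and smooth_on_pt_radial_div: "smooth_on_pt (exterior M k) (\<lambda>q. complex_of_real (c / rad q + d))"
    and smooth_on_pt_radial_wprime_over_wf: "smooth_on_pt (exterior M k)
      (\<lambda>q. complex_of_real (c * wprime_over_wf M (rad q)))"
proof -
  have "q \<in> exterior M k \<Longrightarrow> complex_of_real (rad q) \<noteq> 0"
    and "q \<in> exterior M k \<Longrightarrow> complex_of_real (Delta M k (rad q)) \<noteq> 0" for q
    using exteriorD[of q M k] by simp_all
  note nonzero = this power_not_zero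
  show "smooth_on_pt (exterior M k) (\<lambda>q. complex_of_real (c * (Delta M k (rad q) / rad q ^ 2)))"
    using open_exterior by simp (intro smooth_on_pt_intros smooth_on_pt_radial_Delta nonzero)
  show "smooth_on_pt (exterior M k) (\<lambda>q. complex_of_real (wf M k (rad q)))"
    using open_exterior unfolding wf_def
    by simp (intro smooth_on_pt_intros smooth_on_pt_radial_Delta nonzero)
  show "smooth_on_pt (exterior M k) (\<lambda>q. complex_of_real (1 / wf M k (rad q)))"
    using open_exterior unfolding wf_def
    by simp (intro smooth_on_pt_intros smooth_on_pt_radial_Delta nonzero)
  show "smooth_on_pt (exterior M k) (\<lambda>q. complex_of_real (c / rad q + d))"
    using open_exterior by simp (intro smooth_on_pt_intros nonzero)
  show "smooth_on_pt (exterior M k) (\<lambda>q. complex_of_real (c * wprime_over_wf M (rad q)))"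
    using open_exterior unfolding wprime_over_wf_def by simp (intro smooth_on_pt_intros nonzero)
qed

lemma wf_has_real_derivative:
  "0 < r \<Longrightarrow> (wf M k has_real_derivative 6 * M / r ^ 4 - 2 / r ^ 3) (at r)"
proof -
  assume r: "0 < r"
  have "wf M k = (\<lambda>r. (r^2 + k^2 * r^4 - 2 * M * r) / r^4)"
    by (simp add: fun_eq_iff wf_def Delta_def)
  then show ?thesis
    using r by (auto intro!: derivative_eq_intros simp: field_simps power_eq_if)
qed

lemma Delta_div_eq: "r \<noteq> 0 \<Longrightarrow> Delta M k r / r ^ 2 = r ^ 2 * wf M k r"
  by (simp add: wf_def field_simps power_eq_if)

lemma wprime_eq: "0 < r \<Longrightarrow> wprime M k r = wf M k r * wprime_over_wf M r"
  unfolding wprime_def wprime_over_wf_def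
  by (simp add: DERIV_imp_deriv[OF wf_has_real_derivative] Delta_div_eq wf_def field_simps power_eq_if)

lemma wprime_div_wf:
  "0 < r \<Longrightarrow> 0 < Delta M k r \<Longrightarrow> wprime M k r / wf M k r = wprime_over_wf M r"
  by (simp add: wprime_eq wf_def)

definition null_deriv :: "real \<Rightarrow> real \<Rightarrow> real \<Rightarrow> fn \<Rightarrow> fn" where
  "null_deriv \<epsilon> M k u
    = (\<lambda>q. pd 0 u q + radial_mult (\<lambda>r. \<epsilon> * (Delta M k r / r ^ 2)) (pd 1 u) q)"

definition scaled_null_deriv :: "real \<Rightarrow> real \<Rightarrow> real \<Rightarrow> fn \<Rightarrow> fn" where
  "scaled_null_deriv \<epsilon> M k u = radial_mult (\<lambda>r. 1 / wf M k r) (null_deriv \<epsilon> M k u)"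

lemma Lop_eq_null_deriv: "Lop M k = null_deriv 1 M k"
  and Lbar_eq_null_deriv: "Lbar M k = null_deriv (- 1) M k"
  by (auto simp: fun_eq_iff Lop_def Lbar_def null_deriv_def radial_mult_def)

lemma winvL_eq_scaled_null_deriv: "winvL M k = scaled_null_deriv 1 M k"
  and winvLbar_eq_scaled_null_deriv: "winvLbar M k = scaled_null_deriv (- 1) M k"
  by (auto simp: fun_eq_iff winvL_def winvLbar_def scaled_null_deriv_def radial_mult_def
      Lop_eq_null_deriv Lbar_eq_null_deriv)

lemma null_deriv_cong:
  assumes "open S" "p \<in> S" "\<And>q. q \<in> S \<Longrightarrow> u q = v q"
  shows "null_deriv \<epsilon> M k u p = null_deriv \<epsilon> M k v p"
  using pd_cong_open[OF assms, where i=0] pd_cong_open[OF assms, where i=1]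
  by (simp add: null_deriv_def radial_mult_def)

lemma null_deriv_add:
  assumes "u differentiable (at p)" "v differentiable (at p)"
  shows "null_deriv \<epsilon> M k (\<lambda>q. u q + v q) p = null_deriv \<epsilon> M k u p + null_deriv \<epsilon> M k v p"
  using assms by (simp add: null_deriv_def radial_mult_def pd_add algebra_simps add_divide_distrib)

lemma null_deriv_cmult:
  assumes "u differentiable (at p)"
  shows "null_deriv \<epsilon> M k (\<lambda>q. c * u q) p = c * null_deriv \<epsilon> M k u p"
  using pd_mult_invariant[OF assms, of "\<lambda>q. c"] by (simp add: null_deriv_def algebra_simps)

lemma null_deriv_diff:
  assumes "u differentiable (at p)" "v differentiable (at p)"
  shows "null_deriv \<epsilon> M k (\<lambda>q. u q - v q) p = null_deriv \<epsilon> M k u p - null_deriv \<epsilon> M k v p"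
  using null_deriv_add[OF assms(1) differentiable_mult[OF differentiable_const[of "- 1"] assms(2)], of \<epsilon> M k]
    null_deriv_cmult[OF assms(2), of \<epsilon> M k "- 1"]
  by simp

lemma null_deriv_radial_mult:
  assumes "u differentiable (at p)" "(f has_real_derivative f') (at (rad p))"
  shows "null_deriv \<epsilon> M k (radial_mult f u) p
    = radial_mult f (null_deriv \<epsilon> M k u) p + complex_of_real (\<epsilon> * (Delta M k (rad p) / rad p ^ 2 * f')) * u p"
  using assms by (simp add: null_deriv_def pd_radial_mult pd_radial_mult_rad[OF assms] algebra_simps
      add_divide_distrib)

lemma Delta_div_has_real_derivative:
  "r \<noteq> 0 \<Longrightarrow> ((\<lambda>r. Delta M k r / r ^ 2) has_real_derivative 2 * k^2 * r + 2 * M / r^2) (at r)"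
  unfolding Delta_def by (auto intro!: derivative_eq_intros simp: field_simps power_eq_if)

lemma smooth_on_pt_null_deriv:
  "smooth_on_pt (exterior M k) u \<Longrightarrow> smooth_on_pt (exterior M k) (null_deriv \<epsilon> M k u)"
  unfolding null_deriv_def radial_mult_def
  by (intro smooth_on_pt_intros smooth_on_pt_radial_tortoise open_exterior)

lemma smooth_on_pt_scaled_null_deriv:
  "smooth_on_pt (exterior M k) u \<Longrightarrow> smooth_on_pt (exterior M k) (scaled_null_deriv \<epsilon> M k u)"
  unfolding scaled_null_deriv_def
  by (intro smooth_on_pt_radial_mult smooth_on_pt_radial_inverse_wf smooth_on_pt_null_deriv open_exterior)

lemma null_deriv_commute:
  assumes u: "smooth_on_pt (exterior M k) u" and p: "p \<in> exterior M k"
  shows "null_deriv \<epsilon> M k (null_deriv \<delta> M k u) p = null_deriv \<delta> M k (null_deriv \<epsilon> M k u) p"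
proof -
  define c where "c r = Delta M k r / r ^ 2" for r
  have c': "((\<lambda>r. \<delta> * c r) has_real_derivative \<delta> * (2 * k^2 * rad p + 2 * M / rad p ^ 2)) (at (rad p))"
    and c'': "((\<lambda>r. \<epsilon> * c r) has_real_derivative \<epsilon> * (2 * k^2 * rad p + 2 * M / rad p ^ 2)) (at (rad p))"
    unfolding c_def using exteriorD(1)[OF p] by (intro DERIV_cmult Delta_div_has_real_derivative; simp)+
  have diff: "pd i u differentiable (at p)" "pd i (pd j u) differentiable (at p)"
    "radial_mult (\<lambda>r. \<delta> * c r) (pd i u) differentiable (at p)"
    "radial_mult (\<lambda>r. \<epsilon> * c r) (pd i u) differentiable (at p)" for i j
    unfolding c_def
    by (intro smooth_on_pt_differentiable[OF _ p] smooth_on_pt_pd smooth_on_pt_radial_mult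
        smooth_on_pt_radial_tortoise u open_exterior)+
  have "null_deriv \<epsilon> M k (null_deriv \<delta> M k u) p
    = null_deriv \<epsilon> M k (pd 0 u) p + null_deriv \<epsilon> M k (radial_mult (\<lambda>r. \<delta> * c r) (pd 1 u)) p"
    unfolding null_deriv_def[of \<delta>] c_def[symmetric] by (intro null_deriv_add diff)
  also have "\<dots> = pd 0 (pd 0 u) p + complex_of_real (\<epsilon> * c (rad p)) * pd 1 (pd 0 u) p
      + complex_of_real (\<delta> * c (rad p)) * pd 0 (pd 1 u) p
      + complex_of_real (\<epsilon> * \<delta> * c (rad p) * c (rad p)) * pd 1 (pd 1 u) p
      + complex_of_real (\<epsilon> * \<delta> * c (rad p) * (2 * k^2 * rad p + 2 * M / rad p ^ 2)) * pd 1 u p"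
    unfolding null_deriv_radial_mult[OF diff(1) c'] by (simp add: null_deriv_def c_def algebra_simps)
  also have "\<dots> = null_deriv \<delta> M k (pd 0 u) p
      + null_deriv \<delta> M k (radial_mult (\<lambda>r. \<epsilon> * c r) (pd 1 u)) p"
    unfolding null_deriv_radial_mult[OF diff(1) c'']
    using pd_commute_smooth[OF open_exterior u p, of 0 1]
    by (simp add: null_deriv_def c_def algebra_simps)
  also have "\<dots> = null_deriv \<delta> M k (null_deriv \<epsilon> M k u) p"
    unfolding null_deriv_def[of \<epsilon>] c_def[symmetric] by (intro null_deriv_add[symmetric] diff)
  finally show ?thesis .
qed

lemma null_deriv_mult_inverse_wf:
  assumes p: "p \<in> exterior M k" and u: "u differentiable (at p)"
  shows "null_deriv \<epsilon> M k (radial_mult (\<lambda>r. 1 / wf M k r) u) p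
    = radial_mult (\<lambda>r. 1 / wf M k r) (null_deriv \<epsilon> M k u) p
      - complex_of_real (\<epsilon> * wprime_over_wf M (rad p) / wf M k (rad p)) * u p"
proof -
  let ?r = "rad p"
  have r: "0 < ?r" and w: "0 < wf M k ?r"
    using exteriorD[OF p] by (simp_all add: wf_def)
  have d: "((\<lambda>r. 1 / wf M k r) has_real_derivative
      - (6 * M / ?r ^ 4 - 2 / ?r ^ 3) / wf M k ?r ^ 2) (at ?r)"
    using wf_has_real_derivative[OF r] w
    by (auto intro!: derivative_eq_intros simp: power2_eq_square)
  have "Delta M k ?r / ?r ^ 2 * (- (6 * M / ?r ^ 4 - 2 / ?r ^ 3) / wf M k ?r ^ 2)
      = - (wprime_over_wf M ?r / wf M k ?r)"
    unfolding Delta_div_eq[OF r[THEN less_imp_neq, symmetric]]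
    using r w by (simp add: wprime_over_wf_def field_simps power_eq_if)
  from null_deriv_radial_mult[OF u d, of \<epsilon> M k, unfolded this] show ?thesis
    by simp
qed

lemma null_deriv_mult_div:
  assumes p: "p \<in> exterior M k" and u: "u differentiable (at p)" and f: "\<And>r. f r = c / r + d"
  shows "null_deriv \<epsilon> M k (radial_mult f u) p
    = radial_mult f (null_deriv \<epsilon> M k u) p - complex_of_real (\<epsilon> * c * wf M k (rad p)) * u p"
proof -
  let ?r = "rad p"
  have r: "0 < ?r"
    using exteriorD[OF p] by simp
  have d: "(f has_real_derivative - c / ?r ^ 2) (at ?r)"
    unfolding f[abs_def] using r by (auto intro!: derivative_eq_intros simp: power2_eq_square)
  have "Delta M k ?r / ?r ^ 2 * (- c / ?r ^ 2) = - (c * wf M k ?r)"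
    by (simp add: wf_def field_simps power_eq_if)
  from null_deriv_radial_mult[OF u d, of \<epsilon> M k, unfolded this] show ?thesis
    by simp
qed

lemma null_deriv_mult_wprime_over_wf:
  assumes p: "p \<in> exterior M k" and u: "u differentiable (at p)"
  shows "null_deriv \<epsilon> M k (radial_mult (\<lambda>r. c * wprime_over_wf M r) u) p
    = radial_mult (\<lambda>r. c * wprime_over_wf M r) (null_deriv \<epsilon> M k u) p
      + complex_of_real (\<epsilon> * c * (2 - 12 * M / rad p) * wf M k (rad p)) * u p"
proof -
  let ?r = "rad p"
  have r: "0 < ?r"
    using exteriorD[OF p] by simp
  have d: "((\<lambda>r. c * wprime_over_wf M r) has_real_derivative c * (2 / ?r ^ 2 - 12 * M / ?r ^ 3)) (at ?r)"
    unfolding wprime_over_wf_def using r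
    by (auto intro!: derivative_eq_intros simp: field_simps power_eq_if)
  have "Delta M k ?r / ?r ^ 2 * (c * (2 / ?r ^ 2 - 12 * M / ?r ^ 3)) = c * (2 - 12 * M / ?r) * wf M k ?r"
    using r by (simp add: wf_def field_simps power_eq_if)
  from null_deriv_radial_mult[OF u d, of \<epsilon> M k, unfolded this] show ?thesis
    by simp
qed

section \<open>The angular operator\<close>

text \<open>\<^const>\<open>Lang\<close> after the product rule is applied to its \<open>\<theta>\<close>-term
  (\<open>Lang_eq_ang_comb\<close>); all coefficients depend on \<open>\<theta>\<close> alone.\<close>
definition ang_comb :: "real \<Rightarrow> (nat list \<Rightarrow> fn) \<Rightarrow> fn" where
  "ang_comb sg F q = - (complex_of_real (cot (polar q)) * F [2] q + F [2, 2] q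
      + complex_of_real (1 / sin (polar q) ^ 2) * F [3, 3] q
      + complex_of_real sg * 4 * \<i> * complex_of_real (cos (polar q) / sin (polar q) ^ 2) * F [3] q
      - complex_of_real (4 * cot (polar q) ^ 2 + 4) * F [] q)"

lemma ang_comb_cong:
  "(\<And>\<beta>. set \<beta> \<subseteq> {2, 3} \<Longrightarrow> F \<beta> p = G \<beta> p)
    \<Longrightarrow> ang_comb sg F p = ang_comb sg G p"
  by (simp add: ang_comb_def)

lemma pd_sin_polar: "pd 2 (\<lambda>q. complex_of_real (sin (polar q))) p = complex_of_real (cos (polar p))"
  and differentiable_sin_polar: "(\<lambda>q. complex_of_real (sin (polar q))) differentiable (at p)"
proof -
  have "((\<lambda>q. complex_of_real (sin (polar q))) has_derivative
      (\<lambda>h. complex_of_real (polar h * cos (polar p)))) (at p)"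
    by (intro has_derivative_of_real has_derivative_sin bounded_linear_imp_has_derivative
        bounded_linear_polar)
  then show "pd 2 (\<lambda>q. complex_of_real (sin (polar q))) p = complex_of_real (cos (polar p))"
    and "(\<lambda>q. complex_of_real (sin (polar q))) differentiable (at p)"
    by (auto simp: pd_eq_derivative differentiable_def)
qed

lemma Lang_eq_ang_comb:
  assumes p: "p \<in> exterior M k" and u: "smooth_on_pt (exterior M k) u"
  shows "Lang sg u p = ang_comb sg (\<lambda>\<beta>. fold pd \<beta> u) p"
proof -
  have sin: "sin (polar p) \<noteq> 0"
    using exteriorD(3)[OF p] by simp
  have "(\<lambda>(t', r', th', ph'). complex_of_real (sin th') * pd 2 u (t', r', th', ph'))
      = (\<lambda>q. complex_of_real (sin (polar q)) * pd 2 u q)"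
    by auto
  moreover have "pd 2 (\<lambda>q. complex_of_real (sin (polar q)) * pd 2 u q) p
      = complex_of_real (cos (polar p)) * pd 2 u p + complex_of_real (sin (polar p)) * pd 2 (pd 2 u) p"
    using smooth_on_pt_differentiable[OF smooth_on_pt_pd[OF u] p]
    by (simp add: pd_mult differentiable_sin_polar pd_sin_polar)
  ultimately show ?thesis
    using sin by (cases p) (simp add: Lang_def ang_comb_def cot_def field_simps)
qed

lemma pd_ang_comb:
  assumes "i \<noteq> 2" "\<And>\<beta>. F \<beta> differentiable (at p)"
  shows "pd i (ang_comb sg F) p = ang_comb sg (\<lambda>\<beta>. pd i (F \<beta>)) p"
proof -
  have polar: "polar (p + s *\<^sub>R ev i) = polar p" for s
    using polar_ev[OF assms(1)] by simp
  have "((\<lambda>s. F \<beta> (p + s *\<^sub>R ev i)) has_vector_derivative pd i (F \<beta>) p) (at 0)" for \<beta>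
    using has_vector_derivative_pd[of "F \<beta>" p 0 i] assms(2) by simp
  then show ?thesis
    unfolding pd_def[of i "ang_comb sg F"] ang_comb_def polar
    by (intro vector_derivative_at has_vector_derivative_minus has_vector_derivative_diff
        has_vector_derivative_add has_vector_derivative_mult_right)
qed

lemma Lang_cong:
  assumes p: "p \<in> exterior M k" and uv: "\<And>q. q \<in> exterior M k \<Longrightarrow> u q = v q"
  shows "Lang sg u p = Lang sg v p"
proof -
  have pd2: "pd 2 u q = pd 2 v q" and pd3: "pd 3 u q = pd 3 v q" if "q \<in> exterior M k" for q
    using pd_cong_open[OF open_exterior that uv] by simp_all
  have "pd 2 (\<lambda>(t', r', th', ph'). complex_of_real (sin th') * pd 2 u (t', r', th', ph')) p
      = pd 2 (\<lambda>(t', r', th', ph'). complex_of_real (sin th') * pd 2 v (t', r', th', ph')) p"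
    by (rule pd_cong_open[OF open_exterior p]) (auto simp: pd2)
  moreover have "pd 3 (pd 3 u) p = pd 3 (pd 3 v) p"
    by (rule pd_cong_open[OF open_exterior p pd3])
  ultimately show ?thesis
    using pd3[OF p] uv[OF p] by (cases p) (simp add: Lang_def)
qed

lemma smooth_on_pt_Lang:
  assumes u: "smooth_on_pt (exterior M k) u"
  shows "smooth_on_pt (exterior M k) (Lang sg u)"
proof (rule smooth_on_pt_cong[OF open_exterior])
  show "ang_comb sg (\<lambda>\<beta>. fold pd \<beta> u) q = Lang sg u q" if "q \<in> exterior M k" for q
    using Lang_eq_ang_comb[OF that u] by simp
  have nonzero: "q \<in> exterior M k \<Longrightarrow> complex_of_real (sin (polar q)) \<noteq> 0" for q
    using exteriorD(3) by fastforce
  show "smooth_on_pt (exterior M k) (ang_comb sg (\<lambda>\<beta>. fold pd \<beta> u))"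
    unfolding ang_comb_def[abs_def] cot_def using open_exterior u
    by simp (intro smooth_on_pt_intros power_not_zero nonzero)
qed

lemma Lang_pd_commute:
  assumes i: "i \<noteq> 2" and p: "p \<in> exterior M k" and u: "smooth_on_pt (exterior M k) u"
  shows "Lang sg (pd i u) p = pd i (Lang sg u) p"
proof -
  have "pd i (Lang sg u) p = pd i (ang_comb sg (\<lambda>\<beta>. fold pd \<beta> u)) p"
    using Lang_eq_ang_comb[OF _ u] by (intro pd_cong_open[OF open_exterior p]) simp
  also have "\<dots> = ang_comb sg (\<lambda>\<beta>. fold pd (\<beta> @ [i]) u) p"
    using smooth_on_pt_differentiable[OF smooth_on_pt_fold_pd[OF u] p]
    by (simp add: pd_ang_comb[OF i])
  also have "\<dots> = ang_comb sg (\<lambda>\<beta>. fold pd \<beta> (pd i u)) p"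
  proof (rule ang_comb_cong)
    show "fold pd (\<beta> @ [i]) u p = fold pd \<beta> (pd i u) p" for \<beta>
      using fold_pd_perm[OF open_exterior u p, of "\<beta> @ [i]" "i # \<beta>"] by simp
  qed
  also have "\<dots> = Lang sg (pd i u) p"
    using Lang_eq_ang_comb[OF p smooth_on_pt_pd[OF u]] by simp
  finally show ?thesis ..
qed

lemma Lang_add:
  assumes p: "p \<in> exterior M k"
    and u: "smooth_on_pt (exterior M k) u" and v: "smooth_on_pt (exterior M k) v"
  shows "Lang sg (\<lambda>q. u q + v q) p = Lang sg u p + Lang sg v p"
proof -
  have "Lang sg (\<lambda>q. u q + v q) p = ang_comb sg (\<lambda>\<beta> q. fold pd \<beta> u q + fold pd \<beta> v q) p"
    unfolding Lang_eq_ang_comb[OF p smooth_on_pt_add[OF open_exterior u v]]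
    by (intro ang_comb_cong fold_pd_add[OF open_exterior u v p])
  also have "\<dots> = Lang sg u p + Lang sg v p"
    unfolding Lang_eq_ang_comb[OF p u] Lang_eq_ang_comb[OF p v]
    by (simp add: ang_comb_def algebra_simps add_divide_distrib)
  finally show ?thesis .
qed

lemma Lang_radial_mult:
  assumes p: "p \<in> exterior M k" and f: "smooth_on_pt (exterior M k) (\<lambda>q. complex_of_real (f (rad q)))"
    and u: "smooth_on_pt (exterior M k) u"
  shows "Lang sg (radial_mult f u) p = radial_mult f (Lang sg u) p"
proof -
  have "fold pd \<beta> (radial_mult f u) p = complex_of_real (f (rad p)) * fold pd \<beta> u p"
    if "set \<beta> \<subseteq> {2, 3}" for \<beta>
  proof -
    have "rad (ev i) = 0" if "i \<in> set \<beta>" for i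
      using \<open>set \<beta> \<subseteq> {2, 3}\<close> that by (auto intro: rad_ev)
    then show ?thesis
      unfolding radial_mult_def by (intro fold_pd_mult_invariant[OF open_exterior u p]) simp
  qed
  then have "Lang sg (radial_mult f u) p
      = ang_comb sg (\<lambda>\<beta> q. complex_of_real (f (rad p)) * fold pd \<beta> u q) p"
    unfolding Lang_eq_ang_comb[OF p smooth_on_pt_radial_mult[OF open_exterior f u]]
    by (intro ang_comb_cong)
  also have "\<dots> = complex_of_real (f (rad p)) * Lang sg u p"
    unfolding Lang_eq_ang_comb[OF p u] by (simp add: ang_comb_def algebra_simps)
  finally show ?thesis
    by simp
qed

lemma Lang_diff:
  assumes p: "p \<in> exterior M k"
    and u: "smooth_on_pt (exterior M k) u" and v: "smooth_on_pt (exterior M k) v"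
  shows "Lang sg (\<lambda>q. u q - v q) p = Lang sg u p - Lang sg v p"
proof -
  have v': "smooth_on_pt (exterior M k) (radial_mult (\<lambda>r. - 1) v)"
    by (intro smooth_on_pt_radial_mult smooth_on_pt_const open_exterior v)
  have "(\<lambda>q. u q - v q) = (\<lambda>q. u q + radial_mult (\<lambda>r. - 1) v q)"
    by simp
  then show ?thesis
    using Lang_add[OF p u v'] Lang_radial_mult[OF p smooth_on_pt_const v] by simp
qed

lemma Lang_null_deriv_commute:
  assumes p: "p \<in> exterior M k" and u: "smooth_on_pt (exterior M k) u"
  shows "Lang sg (null_deriv \<epsilon> M k u) p = null_deriv \<epsilon> M k (Lang sg u) p"
proof -
  have "Lang sg (null_deriv \<epsilon> M k u) p
      = Lang sg (pd 0 u) p + Lang sg (radial_mult (\<lambda>r. \<epsilon> * (Delta M k r / r ^ 2)) (pd 1 u)) p"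
    unfolding null_deriv_def
    by (intro Lang_add[OF p] smooth_on_pt_pd u smooth_on_pt_radial_mult smooth_on_pt_radial_tortoise
        open_exterior)
  also have "\<dots> = null_deriv \<epsilon> M k (Lang sg u) p"
    unfolding Lang_radial_mult[OF p smooth_on_pt_radial_tortoise smooth_on_pt_pd[OF u]]
    using Lang_pd_commute[OF _ p u, of 0] Lang_pd_commute[OF _ p u, of 1]
    by (simp add: null_deriv_def)
  finally show ?thesis .
qed

section \<open>The Teukolsky--Starobinsky identity\<close>

text \<open>The Teukolsky equation solved for \<open>L \<underline>L \<alpha>\<close>: \<open>\<epsilon> = sg = 1\<close> is the
  spin \<open>+2\<close> case, and \<open>\<epsilon> = sg = -1\<close>, which exchanges \<open>L\<close> and \<open>\<underline>L\<close>,
  the spin \<open>-2\<close> case.\<close>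
locale teukolsky_solution =
  fixes M k \<epsilon> sg :: real and \<alpha> :: fn
  assumes sign: "\<epsilon> = 1 \<or> \<epsilon> = - 1"
    and smooth: "smooth_on_pt (exterior M k) \<alpha>"
    and teukolsky: "\<And>q. q \<in> exterior M k \<Longrightarrow> Lop M k (Lbar M k \<alpha>) q
      = complex_of_real (2 * \<epsilon> * wprime_over_wf M (rad q)) * null_deriv (- \<epsilon>) M k \<alpha> q
        - complex_of_real (wf M k (rad q)) * (Lang sg \<alpha> q + complex_of_real (6 * M / rad q - 2) * \<alpha> q)"
begin

abbreviation "E \<equiv> exterior M k"
abbreviation "L \<equiv> null_deriv \<epsilon> M k"
abbreviation "Lb \<equiv> null_deriv (- \<epsilon>) M k"

definition A :: "fn \<Rightarrow> fn" where
  "A u = (\<lambda>q. Lang sg u q + radial_mult (\<lambda>r. 6 * M / r - 2) u q)"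

definition B :: "fn \<Rightarrow> fn" where
  "B u = (\<lambda>q. Lang sg u q - radial_mult (\<lambda>r. 6 * M / r) u q)"

definition P :: fn where
  "P = scaled_null_deriv (- \<epsilon>) M k \<alpha>"

lemma smooth_A: "smooth_on_pt E u \<Longrightarrow> smooth_on_pt E (A u)"
  and smooth_B: "smooth_on_pt E u \<Longrightarrow> smooth_on_pt E (B u)"
proof -
  have "smooth_on_pt E (\<lambda>q. complex_of_real (6 * M / rad q - 2))"
    and "smooth_on_pt E (\<lambda>q. complex_of_real (6 * M / rad q))"
    using smooth_on_pt_radial_div[of M k "6 * M" "- 2"] smooth_on_pt_radial_div[of M k "6 * M" 0]
    by simp_all
  note radial = this
  show "smooth_on_pt E u \<Longrightarrow> smooth_on_pt E (A u)"
    unfolding A_def by (intro smooth_on_pt_add smooth_on_pt_Lang smooth_on_pt_radial_mult radial open_exterior)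
  show "smooth_on_pt E u \<Longrightarrow> smooth_on_pt E (B u)"
    unfolding B_def by (intro smooth_on_pt_diff smooth_on_pt_Lang smooth_on_pt_radial_mult radial open_exterior)
qed

lemma smooth_P: "smooth_on_pt E P"
  unfolding P_def by (rule smooth_on_pt_scaled_null_deriv[OF smooth])

lemma Lb_eq_wf_P: "q \<in> E \<Longrightarrow> Lb \<alpha> q = complex_of_real (wf M k (rad q)) * P q"
  using exteriorD[of q M k] by (simp add: P_def scaled_null_deriv_def wf_def)

lemma L_Lb_eq_Lop_Lbar: "q \<in> E \<Longrightarrow> L (Lb \<alpha>) q = Lop M k (Lbar M k \<alpha>) q"
  using sign null_deriv_commute[OF smooth, of q 1 "- 1"] by (auto simp: Lop_eq_null_deriv Lbar_eq_null_deriv)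

lemma null_deriv_P:
  assumes q: "q \<in> E"
  shows "L P q = radial_mult (\<lambda>r. \<epsilon> * wprime_over_wf M r) P q - A \<alpha> q"
proof -
  have w: "wf M k (rad q) \<noteq> 0"
    using exteriorD[OF q] by (simp add: wf_def)
  have "L P q = complex_of_real (1 / wf M k (rad q)) * L (Lb \<alpha>) q
      - complex_of_real (\<epsilon> * wprime_over_wf M (rad q) / wf M k (rad q)) * Lb \<alpha> q"
    unfolding P_def scaled_null_deriv_def
    by (simp add: null_deriv_mult_inverse_wf[OF q smooth_on_pt_differentiable[OF smooth_on_pt_null_deriv[OF smooth] q]])
  also have "\<dots> = radial_mult (\<lambda>r. \<epsilon> * wprime_over_wf M r) P q - A \<alpha> q"
    unfolding L_Lb_eq_Lop_Lbar[OF q] teukolsky[OF q] Lb_eq_wf_P[OF q] A_def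
    using w by (simp add: field_simps)
  finally show ?thesis .
qed

lemma Lb_A_alpha:
  assumes q: "q \<in> E"
  shows "Lb (A \<alpha>) q
    = complex_of_real (wf M k (rad q)) * A P q + complex_of_real (6 * \<epsilon> * M * wf M k (rad q)) * \<alpha> q"
proof -
  have radial: "smooth_on_pt E (\<lambda>q. complex_of_real (6 * M / rad q - 2))"
    using smooth_on_pt_radial_div[of M k "6 * M" "- 2"] by simp
  have "Lb (A \<alpha>) q = Lb (Lang sg \<alpha>) q + Lb (radial_mult (\<lambda>r. 6 * M / r - 2) \<alpha>) q"
    unfolding A_def
    by (intro null_deriv_add smooth_on_pt_differentiable[OF _ q] smooth_on_pt_Lang smooth smooth_on_pt_radial_mult
        radial open_exterior)
  also have "Lb (Lang sg \<alpha>) q = Lang sg (radial_mult (wf M k) P) q"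
    unfolding Lang_null_deriv_commute[OF q smooth, symmetric]
    by (rule Lang_cong[OF q]) (simp add: Lb_eq_wf_P)
  also have "\<dots> = complex_of_real (wf M k (rad q)) * Lang sg P q"
    using Lang_radial_mult[OF q smooth_on_pt_radial_wf smooth_P] by simp
  also have "Lb (radial_mult (\<lambda>r. 6 * M / r - 2) \<alpha>) q
      = complex_of_real (6 * M / rad q - 2) * Lb \<alpha> q
        + complex_of_real (6 * \<epsilon> * M * wf M k (rad q)) * \<alpha> q"
    by (subst null_deriv_mult_div[OF q smooth_on_pt_differentiable[OF smooth q], where c = "6 * M" and d = "- 2"])
       simp_all
  finally show ?thesis
    by (simp add: Lb_eq_wf_P[OF q] A_def algebra_simps)
qed

lemma null_deriv_scaled_P:
  assumes q: "q \<in> E"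
  shows "L (scaled_null_deriv (- \<epsilon>) M k P) q = - (B P q + complex_of_real (6 * \<epsilon> * M) * \<alpha> q)"
proof -
  have w: "wf M k (rad q) \<noteq> 0" and r: "rad q \<noteq> 0"
    using exteriorD[OF q] by (simp_all add: wf_def)
  have LbP: "smooth_on_pt E (Lb P)"
    by (rule smooth_on_pt_null_deriv[OF smooth_P])
  note radial = smooth_on_pt_radial_wprime_over_wf[of M k \<epsilon>]
  have "L (Lb P) q = Lb (L P) q"
    by (rule null_deriv_commute[OF smooth_P q])
  also have "\<dots> = Lb (\<lambda>q. radial_mult (\<lambda>r. \<epsilon> * wprime_over_wf M r) P q - A \<alpha> q) q"
    by (rule null_deriv_cong[OF open_exterior q null_deriv_P])
  also have "\<dots> = Lb (radial_mult (\<lambda>r. \<epsilon> * wprime_over_wf M r) P) q - Lb (A \<alpha>) q"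
    by (intro null_deriv_diff smooth_on_pt_differentiable[OF _ q] smooth_on_pt_radial_mult radial smooth_P smooth_A
        smooth open_exterior)
  also have "\<dots> = complex_of_real (\<epsilon> * wprime_over_wf M (rad q)) * Lb P q
      - complex_of_real (\<epsilon> * \<epsilon> * (2 - 12 * M / rad q) * wf M k (rad q)) * P q - Lb (A \<alpha>) q"
    by (simp add: null_deriv_mult_wprime_over_wf[OF q smooth_on_pt_differentiable[OF smooth_P q]])
  finally have LLbP: "L (Lb P) q = \<dots>" .
  have "L (scaled_null_deriv (- \<epsilon>) M k P) q = complex_of_real (1 / wf M k (rad q)) * L (Lb P) q
      - complex_of_real (\<epsilon> * wprime_over_wf M (rad q) / wf M k (rad q)) * Lb P q"
    unfolding scaled_null_deriv_def
    by (simp add: null_deriv_mult_inverse_wf[OF q smooth_on_pt_differentiable[OF LbP q]])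
  also have "\<dots> = - (B P q + complex_of_real (6 * \<epsilon> * M) * \<alpha> q)"
    unfolding LLbP Lb_A_alpha[OF q]
    using sign w r by (elim disjE) (simp_all add: A_def B_def wprime_over_wf_def field_simps)
  finally show ?thesis .
qed

lemma null_deriv_B_P:
  assumes q: "q \<in> E"
  shows "L (B P) q = radial_mult (\<lambda>r. \<epsilon> * wprime_over_wf M r) (B P) q - B (A \<alpha>) q
    + complex_of_real (6 * \<epsilon> * M * wf M k (rad q)) * P q"
proof -
  have radial: "smooth_on_pt E (\<lambda>q. complex_of_real (\<epsilon> * wprime_over_wf M (rad q)))"
    "smooth_on_pt E (\<lambda>q. complex_of_real (6 * M / rad q))"
    using smooth_on_pt_radial_wprime_over_wf[of M k \<epsilon>] smooth_on_pt_radial_div[of M k "6 * M" 0]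
    by simp_all
  have "L (B P) q = L (Lang sg P) q - L (radial_mult (\<lambda>r. 6 * M / r) P) q"
    unfolding B_def
    by (intro null_deriv_diff smooth_on_pt_differentiable[OF _ q] smooth_on_pt_Lang smooth_P smooth_on_pt_radial_mult
        radial open_exterior)
  also have "L (Lang sg P) q = Lang sg (\<lambda>q. radial_mult (\<lambda>r. \<epsilon> * wprime_over_wf M r) P q - A \<alpha> q) q"
    unfolding Lang_null_deriv_commute[OF q smooth_P, symmetric]
    by (rule Lang_cong[OF q null_deriv_P])
  also have "\<dots> = complex_of_real (\<epsilon> * wprime_over_wf M (rad q)) * Lang sg P q - Lang sg (A \<alpha>) q"
    unfolding Lang_diff[OF q smooth_on_pt_radial_mult[OF open_exterior radial(1) smooth_P] smooth_A[OF smooth]]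
      Lang_radial_mult[OF q radial(1) smooth_P]
    by simp
  also have "L (radial_mult (\<lambda>r. 6 * M / r) P) q
      = complex_of_real (6 * M / rad q) * L P q - complex_of_real (6 * \<epsilon> * M * wf M k (rad q)) * P q"
    by (subst null_deriv_mult_div[OF q smooth_on_pt_differentiable[OF smooth_P q], where c = "6 * M" and d = 0])
       simp_all
  finally show ?thesis
    by (simp add: null_deriv_P[OF q] B_def algebra_simps)
qed

lemma null_deriv_scaled_scaled_P:
  assumes q: "q \<in> E"
  shows "L (scaled_null_deriv \<epsilon> M k (scaled_null_deriv (- \<epsilon>) M k P)) q
    = - (complex_of_real (1 / wf M k (rad q)) * (L (B P) q + complex_of_real (6 * \<epsilon> * M) * L \<alpha> q)
      - complex_of_real (\<epsilon> * wprime_over_wf M (rad q) / wf M k (rad q))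
        * (B P q + complex_of_real (6 * \<epsilon> * M) * \<alpha> q))"
proof -
  define Y where "Y q = B P q + complex_of_real (6 * \<epsilon> * M) * \<alpha> q" for q
  have Y: "smooth_on_pt E Y"
    unfolding Y_def
    by (intro smooth_on_pt_add smooth_on_pt_mult smooth_B smooth_P smooth smooth_on_pt_const open_exterior)
  have "L (scaled_null_deriv \<epsilon> M k (scaled_null_deriv (- \<epsilon>) M k P)) q
      = L (\<lambda>q. - radial_mult (\<lambda>r. 1 / wf M k r) Y q) q"
    unfolding scaled_null_deriv_def[of \<epsilon>]
    by (rule null_deriv_cong[OF open_exterior q]) (simp add: null_deriv_scaled_P Y_def minus_divide_left)
  also have "\<dots> = - L (radial_mult (\<lambda>r. 1 / wf M k r) Y) q"
    using null_deriv_cmult[of "radial_mult (\<lambda>r. 1 / wf M k r) Y" q \<epsilon> M k "- 1"]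
      smooth_on_pt_differentiable[OF smooth_on_pt_radial_mult[OF open_exterior smooth_on_pt_radial_inverse_wf Y] q]
    by simp
  also have "L (radial_mult (\<lambda>r. 1 / wf M k r) Y) q = complex_of_real (1 / wf M k (rad q)) * L Y q
      - complex_of_real (\<epsilon> * wprime_over_wf M (rad q) / wf M k (rad q)) * Y q"
    by (simp add: null_deriv_mult_inverse_wf[OF q smooth_on_pt_differentiable[OF Y q]])
  also have "L Y q = L (B P) q + complex_of_real (6 * \<epsilon> * M) * L \<alpha> q"
    unfolding Y_def
    using null_deriv_cmult[OF smooth_on_pt_differentiable[OF smooth q], of \<epsilon> M k]
    by (simp add: null_deriv_add smooth_on_pt_differentiable[OF smooth_B[OF smooth_P] q]
        smooth_on_pt_differentiable[OF _ q] smooth_on_pt_mult smooth_on_pt_const smooth open_exterior)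
  finally show ?thesis
    by (simp add: Y_def)
qed

lemma Lang_A_alpha:
  assumes q: "q \<in> E"
  shows "Lang sg (A \<alpha>) q = Lang sg (Lang sg \<alpha>) q + complex_of_real (6 * M / rad q - 2) * Lang sg \<alpha> q"
proof -
  have radial: "smooth_on_pt E (\<lambda>q. complex_of_real (6 * M / rad q - 2))"
    using smooth_on_pt_radial_div[of M k "6 * M" "- 2"] by simp
  show ?thesis
    unfolding A_def Lang_add[OF q smooth_on_pt_Lang[OF smooth] smooth_on_pt_radial_mult[OF open_exterior radial smooth]]
      Lang_radial_mult[OF q radial smooth]
    by simp
qed

theorem teukolsky_starobinsky:
  assumes q: "q \<in> E"
  shows "Lang sg (Lang sg \<alpha>) q - 2 * Lang sg \<alpha> q - complex_of_real (12 * \<epsilon> * M) * pd 0 \<alpha> q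
    = complex_of_real (wf M k (rad q) ^ 2) * scaled_null_deriv \<epsilon> M k (scaled_null_deriv \<epsilon> M k
        (scaled_null_deriv (- \<epsilon>) M k (scaled_null_deriv (- \<epsilon>) M k \<alpha>))) q"
proof -
  have w: "wf M k (rad q) \<noteq> 0" and r: "rad q \<noteq> 0"
    using exteriorD[OF q] by (simp_all add: wf_def)
  have L_alpha: "L \<alpha> q = 2 * pd 0 \<alpha> q - complex_of_real (wf M k (rad q)) * P q"
    unfolding Lb_eq_wf_P[OF q, symmetric] by (simp add: null_deriv_def)
  have "complex_of_real (wf M k (rad q) ^ 2) * scaled_null_deriv \<epsilon> M k (scaled_null_deriv \<epsilon> M k
        (scaled_null_deriv (- \<epsilon>) M k (scaled_null_deriv (- \<epsilon>) M k \<alpha>))) q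
      = complex_of_real (wf M k (rad q)) * L (scaled_null_deriv \<epsilon> M k (scaled_null_deriv (- \<epsilon>) M k P)) q"
    unfolding P_def[symmetric] scaled_null_deriv_def[of \<epsilon> M k "scaled_null_deriv \<epsilon> M k _"]
    using w by (simp add: power2_eq_square)
  also have "\<dots> = Lang sg (Lang sg \<alpha>) q - 2 * Lang sg \<alpha> q - complex_of_real (12 * \<epsilon> * M) * pd 0 \<alpha> q"
    unfolding null_deriv_scaled_scaled_P[OF q] null_deriv_B_P[OF q] L_alpha B_def[of "A \<alpha>"] Lang_A_alpha[OF q]
    using sign w r by (elim disjE) (simp_all add: A_def B_def wprime_over_wf_def field_simps power_eq_if)
  finally show ?thesis ..
qed
end

lemma teukolsky_solution_plus:
  assumes "smooth_on_pt (exterior M k) u" "\<And>p. p \<in> exterior M k \<Longrightarrow> Teuk_plus M k u p = 0"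
  shows "teukolsky_solution M k 1 1 u"
proof
  fix q assume q: "q \<in> exterior M k"
  have "wprime_over_wf M (rad q) = wprime M k (rad q) / wf M k (rad q)"
    using exteriorD[OF q] by (simp add: wprime_div_wf)
  then show "Lop M k (Lbar M k u) q
    = complex_of_real (2 * 1 * wprime_over_wf M (rad q)) * null_deriv (- 1) M k u q
      - complex_of_real (wf M k (rad q)) * (Lang 1 u q + complex_of_real (6 * M / rad q - 2) * u q)"
    using assms(2)[OF q] unfolding Lbar_eq_null_deriv[symmetric]
    by (cases q) (simp add: Teuk_plus_def algebra_simps)
qed (use assms(1) in simp_all)

lemma teukolsky_solution_minus:
  assumes "smooth_on_pt (exterior M k) u" "\<And>p. p \<in> exterior M k \<Longrightarrow> Teuk_minus M k u p = 0"
  shows "teukolsky_solution M k (- 1) (- 1) u"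
proof
  fix q assume q: "q \<in> exterior M k"
  have "wprime_over_wf M (rad q) = wprime M k (rad q) / wf M k (rad q)"
    using exteriorD[OF q] by (simp add: wprime_div_wf)
  then show "Lop M k (Lbar M k u) q
    = complex_of_real (2 * - 1 * wprime_over_wf M (rad q)) * null_deriv (- (- 1)) M k u q
      - complex_of_real (wf M k (rad q)) * (Lang (- 1) u q + complex_of_real (6 * M / rad q - 2) * u q)"
    using assms(2)[OF q] unfolding minus_minus Lop_eq_null_deriv[symmetric]
    by (cases q) (simp add: Teuk_minus_def algebra_simps)
qed (use assms(1) in simp_all)

theorem lemma2p9:
  fixes M k :: real and ap am :: fn
  assumes "0 < M" and "0 < k"
    and "smooth_on_pt (exterior M k) ap"
    and "\<And>t r th ph. ap (t, r, th, ph + 2 * pi) = ap (t, r, th, ph)"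
    and "\<And>p. p \<in> exterior M k \<Longrightarrow> Teuk_plus M k ap p = 0"
    and "smooth_on_pt (exterior M k) am"
    and "\<And>t r th ph. am (t, r, th, ph + 2 * pi) = am (t, r, th, ph)"
    and "\<And>p. p \<in> exterior M k \<Longrightarrow> Teuk_minus M k am p = 0"
  shows "(\<forall>p\<in>exterior M k. case p of (t, r, th, ph) \<Rightarrow>
            Lang 1 (Lang 1 ap) p - 2 * Lang 1 ap p - complex_of_real (12 * M) * pd 0 ap p
          = complex_of_real ((wf M k r)^2) *
              winvL M k (winvL M k (winvLbar M k (winvLbar M k ap))) p)
       \<and> (\<forall>p\<in>exterior M k. case p of (t, r, th, ph) \<Rightarrow>
            Lang (-1) (Lang (-1) am) p - 2 * Lang (-1) am p + complex_of_real (12 * M) * pd 0 am p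
          = complex_of_real ((wf M k r)^2) *
              winvLbar M k (winvLbar M k (winvL M k (winvL M k am))) p)"
  using teukolsky_solution.teukolsky_starobinsky[OF teukolsky_solution_plus[OF assms(3,5)]]
    teukolsky_solution.teukolsky_starobinsky[OF teukolsky_solution_minus[OF assms(6,8)]]
  by (auto simp: winvL_eq_scaled_null_deriv winvLbar_eq_scaled_null_deriv)

end
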